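(* Let $P$ be a simplicial polytope of dimension $d\ge3$. Then $\dim\mathrm{InCone}(P)\le1$.
   Context: $\mathrm{InCone}(P)$ is the set of polytopes with all vertices on a common sphere and with the same normal fan as $P$, modulo translation; it is a polyhedral cone (identified with the set of such polytopes whose inscribing sphere is centered at the origin). *)

theory Defs
  imports "HOL-Analysis.Analysis"
begin

definition normal_cone :: "'a::euclidean_space set \<Rightarrow> 'a set \<Rightarrow> 'a set" where
  "normal_cone P F = {c. \<forall>x\<in>F. \<forall>y\<in>P. c \<bullet> y \<le> c \<bullet> x}"

definition normal_fan :: "'a::euclidean_space set \<Rightarrow> 'a set set" where
  "normal_fan P = {normal_cone P F | F. F face_of P \<and> F \<noteq> {}}"

definition simplicial_polytope :: "'a::euclidean_space set \<Rightarrow> bool" where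
  "simplicial_polytope P \<longleftrightarrow> polytope P \<and>
     (\<forall>F. F facet_of P \<longrightarrow> (\<exists>n. n simplex F))"

definition inscribed_origin :: "'a::euclidean_space set \<Rightarrow> bool" where
  "inscribed_origin Q \<longleftrightarrow> (\<exists>r. \<forall>v. v extreme_point_of Q \<longrightarrow> norm v = r)"

text \<open>InCone(P), identified with the inscribed polytopes with the same normal fan
  whose circumsphere is centered at the origin.\<close>
definition InCone :: "'a::euclidean_space set \<Rightarrow> 'a set set" where
  "InCone P = {Q. polytope Q \<and> normal_fan Q = normal_fan P \<and> inscribed_origin Q}"

text \<open>Support function; polytopes with a fixed normal fan form a cone in the
  space of support functions (Minkowski addition = addition of support functions).\<close>
definition support_fun :: "'a::euclidean_space set \<Rightarrow> 'a \<Rightarrow> real" where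
  "support_fun Q = (\<lambda>u. SUP x\<in>Q. u \<bullet> x)"

definition span_dim_le_one :: "('a \<Rightarrow> real) set \<Rightarrow> bool" where
  "span_dim_le_one S \<longleftrightarrow> (\<exists>g. \<forall>f\<in>S. \<exists>t::real. f = (\<lambda>u. t * g u))"

end

theory Submission
  imports Defs
begin

(*
  A polytope Q with the normal fan of P has a vertex \<sigma>(x) with the same normal cone for every
  vertex x of P, and \<sigma> maps every edge [x, y] of P to a positive multiple of itself. On a facet
  of a simplicial polytope, affine independence of its vertices forces all edges to be scaled
  by the same factor, so \<sigma> is a homothety there. For d \<ge> 3 every edge lies in two facets, whose
  vertices together affinely span the space, so near each vertex p of P the map \<sigma> is a
  homothety on an affinely spanning set. If Q is inscribed in a sphere centred at the origin,
  this homothety sends the (unique) circumcentre of that set to the origin; comparing two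
  inscribed polytopes Q and Q' gives \<sigma>(p) = (r / r') \<sigma>'(p) for the radii r, r', independently
  of p. Hence Q = (r / r') Q', and support functions of InCone(P) are proportional.
*)

section \<open>Normal cones at vertices\<close>

lemma normal_cone_singleton: "normal_cone P {x} = {c. \<forall>y\<in>P. c \<bullet> y \<le> c \<bullet> x}"
  by (simp add: normal_cone_def)

lemma extreme_point_of_imp_mem: "x extreme_point_of S \<Longrightarrow> x \<in> S"
  by (simp add: extreme_point_of_def)

lemma polytope_eq_convex_hull_extreme_points:
  fixes P :: "'a::euclidean_space set"
  assumes "polytope P"
  shows "P = convex hull {v. v extreme_point_of P}"
  by (rule Krein_Milman_Minkowski[OF polytope_imp_compact[OF assms] polytope_imp_convex[OF assms]])

lemma polytope_face_exposed:
  fixes P :: "'a::euclidean_space set"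
  assumes "polytope P" and "F face_of P"
  obtains a b where "\<And>y. y \<in> F \<Longrightarrow> a \<bullet> y = b" "\<And>y. y \<in> P \<Longrightarrow> y \<notin> F \<Longrightarrow> a \<bullet> y < b"
proof -
  have "F exposed_face_of P"
    using assms exposed_face_of_polyhedron polytope_imp_polyhedron by blast
  then obtain a b where le: "P \<subseteq> {y. a \<bullet> y \<le> b}" and eq: "F = P \<inter> {y. a \<bullet> y = b}"
    unfolding exposed_face_of_def by blast
  have "a \<bullet> y < b" if "y \<in> P" "y \<notin> F" for y
  proof -
    have "a \<bullet> y \<le> b" "a \<bullet> y \<noteq> b" using le eq that by blast+
    then show ?thesis by simp
  qed
  then show thesis using that eq by blast
qed

lemma polytope_extreme_point_exposed:
  fixes P :: "'a::euclidean_space set"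
  assumes "polytope P" and "x extreme_point_of P"
  obtains d where "\<And>y. y \<in> P \<Longrightarrow> y \<noteq> x \<Longrightarrow> d \<bullet> y < d \<bullet> x"
proof -
  obtain a b where "a \<bullet> x = b" "\<And>y. y \<in> P \<Longrightarrow> y \<notin> {x} \<Longrightarrow> a \<bullet> y < b"
    using polytope_face_exposed[OF assms(1)] assms(2) face_of_singleton by (metis singletonI)
  then show thesis by (intro that[of a]) auto
qed

lemma normal_cone_perturb:
  fixes P :: "'a::euclidean_space set"
  assumes P: "polytope P" and xW: "x \<in> W" and W: "W \<subseteq> {v. v extreme_point_of P}"
    and eq: "\<And>w. w \<in> W \<Longrightarrow> c \<bullet> w = c \<bullet> x"
    and lt: "\<And>v. v extreme_point_of P \<Longrightarrow> v \<notin> W \<Longrightarrow> c \<bullet> v < c \<bullet> x"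
  obtains e where "e > 0"
    "\<And>z. norm z < e \<Longrightarrow> \<forall>w\<in>W. z \<bullet> w = z \<bullet> x \<Longrightarrow> c + z \<in> normal_cone P {x}"
proof -
  define V where "V = {v. v extreme_point_of P} - W"
  define f where "f v = (c \<bullet> x - c \<bullet> v) / norm (x - v)" for v
  define e where "e = Min (insert 1 (f ` V))"
  have fin: "finite V"
    using finite_polyhedron_extreme_points[OF polytope_imp_polyhedron[OF P]] by (simp add: V_def)
  have fpos: "f v > 0" if "v \<in> V" for v
  proof -
    have "c \<bullet> v < c \<bullet> x" "v \<noteq> x" using that lt xW by (auto simp: V_def)
    then show ?thesis by (simp add: f_def)
  qed
  have "e > 0"
    unfolding e_def using fin fpos by (subst Min_gr_iff) auto
  moreover have "c + z \<in> normal_cone P {x}"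
    if z: "norm z < e" "\<forall>w\<in>W. z \<bullet> w = z \<bullet> x" for z
  proof -
    have "(c + z) \<bullet> v \<le> (c + z) \<bullet> x" if v: "v extreme_point_of P" for v
    proof (cases "v \<in> W")
      case True
      then show ?thesis using eq z(2) by (simp add: inner_add_left)
    next
      case False
      then have vV: "v \<in> V" and "v \<noteq> x" using v xW by (auto simp: V_def)
      then have nxv: "norm (x - v) > 0" by simp
      have "norm z < f v"
        using z(1) fin vV by (auto simp: e_def intro: less_le_trans Min_le)
      then have "norm z * norm (x - v) < c \<bullet> x - c \<bullet> v"
        using nxv by (simp add: f_def pos_less_divide_eq)
      moreover have "z \<bullet> (v - x) \<le> norm z * norm (x - v)"
        using norm_cauchy_schwarz[of z "v - x"] by (simp add: norm_minus_commute)
      ultimately show ?thesis by (simp add: inner_add_left inner_diff_right)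
    qed
    then have "convex hull {v. v extreme_point_of P} \<subseteq> {y. (c + z) \<bullet> y \<le> (c + z) \<bullet> x}"
      by (intro hull_minimal) (auto simp: convex_halfspace_le)
    then show ?thesis
      using polytope_eq_convex_hull_extreme_points[OF P] by (auto simp: normal_cone_singleton)
  qed
  ultimately show thesis by (rule that)
qed

lemma interior_normal_cone_extreme_point:
  fixes P :: "'a::euclidean_space set"
  assumes P: "polytope P" and x: "x extreme_point_of P"
  shows "interior (normal_cone P {x}) \<noteq> {}"
proof -
  obtain d where d: "\<And>y. y \<in> P \<Longrightarrow> y \<noteq> x \<Longrightarrow> d \<bullet> y < d \<bullet> x"
    using polytope_extreme_point_exposed[OF P x] by blast
  have "v extreme_point_of P \<Longrightarrow> v \<notin> {x} \<Longrightarrow> d \<bullet> v < d \<bullet> x" for v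
    using d extreme_point_of_imp_mem by blast
  then obtain e where "e > 0" and e: "\<And>z. norm z < e \<Longrightarrow> d + z \<in> normal_cone P {x}"
    using normal_cone_perturb[OF P, of x "{x}" d] x by auto
  have "ball d e \<subseteq> normal_cone P {x}"
  proof
    fix y assume "y \<in> ball d e"
    then have "norm (y - d) < e" by (simp add: dist_norm norm_minus_commute)
    then show "y \<in> normal_cone P {x}" using e[of "y - d"] by simp
  qed
  then have "d \<in> interior (normal_cone P {x})"
    using \<open>e > 0\<close> by (auto simp: mem_interior)
  then show ?thesis by blast
qed

lemma inner_eq_zero_if_small:
  fixes u w z :: "'a::real_inner"
  assumes "e > 0" and small: "\<And>z. norm z < e \<Longrightarrow> z \<bullet> u = 0 \<Longrightarrow> z \<bullet> w = 0"
    and "z \<bullet> u = 0"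
  shows "z \<bullet> w = 0"
proof -
  define t where "t = e / (2 * (norm z + 1))"
  have "norm z + 1 > 0" by (simp add: add_nonneg_pos)
  then have "t > 0" using \<open>e > 0\<close> by (simp add: t_def)
  have "norm (t *\<^sub>R z) = t * norm z" using \<open>t > 0\<close> by simp
  also have "\<dots> < t * (norm z + 1)" using \<open>t > 0\<close> by simp
  also have "\<dots> = e / 2" using \<open>norm z + 1 > 0\<close> by (simp add: t_def field_simps)
  also have "\<dots> < e" using \<open>e > 0\<close> by simp
  finally have "norm (t *\<^sub>R z) < e" .
  moreover have "(t *\<^sub>R z) \<bullet> u = 0" using \<open>z \<bullet> u = 0\<close> by simp
  ultimately have "(t *\<^sub>R z) \<bullet> w = 0" by (rule small)
  then show ?thesis using \<open>t > 0\<close> by simp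
qed

lemma parallel_if_orthogonal_complement_orthogonal:
  fixes u w :: "'a::real_inner"
  assumes "\<And>z. z \<bullet> u = 0 \<Longrightarrow> z \<bullet> w = 0"
  shows "\<exists>m. w = m *\<^sub>R u"
proof -
  define z where "z = w - ((w \<bullet> u) / (u \<bullet> u)) *\<^sub>R u"
  have "z \<bullet> u = 0" by (cases "u = 0") (simp_all add: z_def inner_diff_left)
  then have "z \<bullet> z = 0" using assms by (simp add: z_def inner_diff_right)
  then show ?thesis by (auto simp: z_def)
qed

lemma inner_eq_if_normal_cone:
  assumes "c \<in> normal_cone S E" and "E \<subseteq> S" and "a \<in> E" "b \<in> E"
  shows "c \<bullet> a = c \<bullet> b"
proof -
  have "c \<bullet> a \<le> c \<bullet> b" "c \<bullet> b \<le> c \<bullet> a"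
    using assms unfolding normal_cone_def by blast+
  then show ?thesis by simp
qed

lemma eq_if_interior_normal_cone:
  fixes S :: "'a::euclidean_space set"
  assumes "interior (normal_cone S E) \<noteq> {}" and "E \<subseteq> S" and "a \<in> E" "b \<in> E"
  shows "a = b"
proof -
  obtain d e where "e > 0" and ball: "ball d e \<subseteq> normal_cone S E"
    using assms(1) by (auto simp: mem_interior)
  have eq: "c \<bullet> (a - b) = 0" if "c \<in> normal_cone S E" for c
    using inner_eq_if_normal_cone[OF that assms(2-4)] by (simp add: inner_diff_right)
  have small: "z \<bullet> (a - b) = 0" if "norm z < e" for z
  proof -
    have "d \<in> normal_cone S E" "d + z \<in> normal_cone S E"
      using ball \<open>e > 0\<close> that by (auto simp: dist_norm)
    then have "d \<bullet> (a - b) = 0" "(d + z) \<bullet> (a - b) = 0" using eq by blast+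
    then show ?thesis by (simp add: inner_add_left)
  qed
  have "(a - b) \<bullet> (a - b) = 0"
    by (rule inner_eq_zero_if_small[OF \<open>e > 0\<close>, of 0]) (use small in auto)
  then show ?thesis by simp
qed

lemma normal_cone_extreme_point_inj:
  fixes P :: "'a::euclidean_space set"
  assumes P: "polytope P" and x: "x extreme_point_of P" and y: "y extreme_point_of P"
    and eq: "normal_cone P {x} = normal_cone P {y}"
  shows "x = y"
proof (rule ccontr)
  assume "x \<noteq> y"
  obtain d where d: "\<And>z. z \<in> P \<Longrightarrow> z \<noteq> x \<Longrightarrow> d \<bullet> z < d \<bullet> x"
    using polytope_extreme_point_exposed[OF P x] by blast
  then have "d \<in> normal_cone P {y}"
    using eq by (auto simp: normal_cone_singleton intro: less_imp_le)
  then have "d \<bullet> x \<le> d \<bullet> y"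
    using x by (auto simp: normal_cone_singleton extreme_point_of_imp_mem)
  then show False using d[of y] y \<open>x \<noteq> y\<close> by (auto simp: extreme_point_of_imp_mem)
qed

lemma same_normal_fan_extreme_point:
  fixes P Q :: "'a::euclidean_space set"
  assumes P: "polytope P" and fan: "normal_fan Q = normal_fan P" and x: "x extreme_point_of P"
  obtains q where "q extreme_point_of Q" "normal_cone Q {q} = normal_cone P {x}"
proof -
  have "normal_cone P {x} \<in> normal_fan Q"
    using fan x face_of_singleton unfolding normal_fan_def by blast
  then obtain E where E: "E face_of Q" "E \<noteq> {}" "normal_cone Q E = normal_cone P {x}"
    unfolding normal_fan_def by blast
  then obtain q where "q \<in> E" by blast
  have "interior (normal_cone Q E) \<noteq> {}"
    using E(3) interior_normal_cone_extreme_point[OF P x] by simp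
  then have "E = {q}"
    using eq_if_interior_normal_cone face_of_imp_subset[OF E(1)] \<open>q \<in> E\<close> by blast
  then show thesis
    using that E face_of_singleton by blast
qed

section \<open>The vertex correspondence of polytopes with equal normal fans\<close>

definition corresponding_vertex :: "'a::euclidean_space set \<Rightarrow> 'a set \<Rightarrow> 'a \<Rightarrow> 'a" where
  "corresponding_vertex P Q x =
     (SOME q. q extreme_point_of Q \<and> normal_cone Q {q} = normal_cone P {x})"

lemma corresponding_vertex:
  fixes P Q :: "'a::euclidean_space set"
  assumes "polytope P" and "normal_fan Q = normal_fan P" and "x extreme_point_of P"
  shows "corresponding_vertex P Q x extreme_point_of Q"
    and "normal_cone Q {corresponding_vertex P Q x} = normal_cone P {x}"
proof -
  have "\<exists>q. q extreme_point_of Q \<and> normal_cone Q {q} = normal_cone P {x}"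
    using same_normal_fan_extreme_point[OF assms] by blast
  then show "corresponding_vertex P Q x extreme_point_of Q"
    and "normal_cone Q {corresponding_vertex P Q x} = normal_cone P {x}"
    unfolding corresponding_vertex_def by (metis (mono_tags, lifting) someI_ex)+
qed

lemma extreme_points_eq_image_corresponding_vertex:
  fixes P Q :: "'a::euclidean_space set"
  assumes P: "polytope P" and Q: "polytope Q" and fan: "normal_fan Q = normal_fan P"
  shows "{q. q extreme_point_of Q} = corresponding_vertex P Q ` {x. x extreme_point_of P}"
proof (intro equalityI subsetI)
  fix q assume "q \<in> {q. q extreme_point_of Q}"
  then obtain x where x: "x extreme_point_of P" "normal_cone P {x} = normal_cone Q {q}"
    using same_normal_fan_extreme_point[OF Q fan[symmetric]] by blast
  then have "corresponding_vertex P Q x = q"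
    using normal_cone_extreme_point_inj[OF Q] corresponding_vertex[OF P fan x(1)] \<open>q \<in> _\<close> by simp
  then show "q \<in> corresponding_vertex P Q ` {x. x extreme_point_of P}" using x(1) by blast
qed (use corresponding_vertex(1)[OF P fan] in blast)

lemma corresponding_vertex_inj:
  fixes P Q :: "'a::euclidean_space set"
  assumes P: "polytope P" and fan: "normal_fan Q = normal_fan P"
    and "x extreme_point_of P" "y extreme_point_of P"
    and "corresponding_vertex P Q x = corresponding_vertex P Q y"
  shows "x = y"
  using assms normal_cone_extreme_point_inj[OF P] corresponding_vertex(2)[OF P fan] by metis

lemma face_of_convex_hull_subset:
  fixes P :: "'a::euclidean_space set"
  assumes "convex hull C face_of P" and "\<not> affine_dependent C" and "D \<subseteq> C"
  shows "convex hull D face_of P"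
  using assms face_of_convex_hull_affine_independent face_of_trans by blast

lemma extreme_point_of_simplex_face:
  fixes P :: "'a::euclidean_space set"
  assumes "convex hull C face_of P" and "\<not> affine_dependent C" and "x \<in> C"
  shows "x extreme_point_of P"
  using face_of_convex_hull_subset[OF assms(1,2), of "{x}"] assms(3) by (simp add: face_of_singleton)

lemma corresponding_vertex_edge_parallel:
  fixes P Q :: "'a::euclidean_space set"
  assumes P: "polytope P" and fan: "normal_fan Q = normal_fan P"
    and edge: "convex hull {x, y} face_of P"
  obtains m where "corresponding_vertex P Q y - corresponding_vertex P Q x = m *\<^sub>R (y - x)"
proof -
  let ?\<sigma> = "corresponding_vertex P Q"
  have x: "x extreme_point_of P" and y: "y extreme_point_of P"
    using extreme_point_of_simplex_face[OF edge affine_independent_2] by auto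
  obtain a b where eq: "\<And>z. z \<in> convex hull {x, y} \<Longrightarrow> a \<bullet> z = b"
    and lt_P: "\<And>z. z \<in> P \<Longrightarrow> z \<notin> convex hull {x, y} \<Longrightarrow> a \<bullet> z < b"
    using polytope_face_exposed[OF P edge] by blast
  have ab: "a \<bullet> x = b" "a \<bullet> y = b"
    using eq hull_inc[of x "{x, y}"] hull_inc[of y "{x, y}"] by blast+
  have lt: "a \<bullet> v < b" if v: "v extreme_point_of P" "v \<notin> {x, y}" for v
  proof -
    have "v \<notin> convex hull {x, y}"
      using v extreme_point_of_face[OF edge] extreme_point_of_convex_hull_2 by blast
    then show ?thesis using lt_P v(1) extreme_point_of_imp_mem by blast
  qed
  obtain e1 where "e1 > 0" and e1: "\<And>z. norm z < e1 \<Longrightarrow> \<forall>w\<in>{x, y}. z \<bullet> w = z \<bullet> x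
      \<Longrightarrow> a + z \<in> normal_cone P {x}"
    using normal_cone_perturb[OF P, of x "{x, y}" a] x y ab lt by auto
  obtain e2 where "e2 > 0" and e2: "\<And>z. norm z < e2 \<Longrightarrow> \<forall>w\<in>{x, y}. z \<bullet> w = z \<bullet> y
      \<Longrightarrow> a + z \<in> normal_cone P {y}"
    using normal_cone_perturb[OF P, of y "{x, y}" a] x y ab lt by auto
  have common: "(a + z) \<bullet> (?\<sigma> y - ?\<sigma> x) = 0"
    if "norm z < min e1 e2" "z \<bullet> (y - x) = 0" for z
  proof -
    have "a + z \<in> normal_cone P {x}" "a + z \<in> normal_cone P {y}"
      using e1 e2 that by (auto simp: inner_diff_right)
    then have "a + z \<in> normal_cone Q {?\<sigma> x, ?\<sigma> y}"
      using corresponding_vertex(2)[OF P fan x] corresponding_vertex(2)[OF P fan y]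
      by (auto simp: normal_cone_def)
    moreover have "{?\<sigma> x, ?\<sigma> y} \<subseteq> Q"
      using corresponding_vertex(1)[OF P fan] x y extreme_point_of_imp_mem by blast
    ultimately have "(a + z) \<bullet> ?\<sigma> y = (a + z) \<bullet> ?\<sigma> x"
      by (rule inner_eq_if_normal_cone) auto
    then show ?thesis by (simp add: inner_diff_right)
  qed
  have "z \<bullet> (?\<sigma> y - ?\<sigma> x) = 0" if "z \<bullet> (y - x) = 0" for z
  proof (rule inner_eq_zero_if_small[of "min e1 e2"])
    show "min e1 e2 > 0" using \<open>e1 > 0\<close> \<open>e2 > 0\<close> by simp
    show "z \<bullet> (?\<sigma> y - ?\<sigma> x) = 0" if "norm z < min e1 e2" "z \<bullet> (y - x) = 0" for z
      using common[OF that] common[of 0] \<open>min e1 e2 > 0\<close> by (simp add: inner_add_left)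
  qed (use that in simp)
  then show thesis
    using parallel_if_orthogonal_complement_orthogonal that by blast
qed

lemma corresponding_vertex_diff_pos:
  fixes P Q :: "'a::euclidean_space set"
  assumes P: "polytope P" and fan: "normal_fan Q = normal_fan P"
    and x: "x extreme_point_of P" and y: "y extreme_point_of P" and "x \<noteq> y"
    and m: "corresponding_vertex P Q y - corresponding_vertex P Q x = m *\<^sub>R (y - x)"
  shows "m > 0"
proof -
  let ?\<sigma> = "corresponding_vertex P Q"
  obtain d where d: "\<And>z. z \<in> P \<Longrightarrow> z \<noteq> x \<Longrightarrow> d \<bullet> z < d \<bullet> x"
    using polytope_extreme_point_exposed[OF P x] by blast
  then have "d \<in> normal_cone Q {?\<sigma> x}"
    using corresponding_vertex(2)[OF P fan x] by (auto simp: normal_cone_singleton intro: less_imp_le)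
  then have "d \<bullet> ?\<sigma> y \<le> d \<bullet> ?\<sigma> x"
    using corresponding_vertex(1)[OF P fan y] by (auto simp: normal_cone_singleton extreme_point_of_imp_mem)
  then have "m * (d \<bullet> (y - x)) \<le> 0"
    by (metis m diff_le_0_iff_le inner_diff_right inner_scaleR_right)
  moreover have "d \<bullet> (y - x) < 0"
    using d[of y] y \<open>x \<noteq> y\<close> by (simp add: inner_diff_right extreme_point_of_imp_mem)
  moreover have "m \<noteq> 0"
    using m corresponding_vertex_inj[OF P fan x y] \<open>x \<noteq> y\<close> by auto
  ultimately show ?thesis by (simp add: mult_le_0_iff)
qed

lemma corresponding_vertex_edge:
  fixes P Q :: "'a::euclidean_space set"
  assumes P: "polytope P" and fan: "normal_fan Q = normal_fan P"
    and edge: "convex hull {x, y} face_of P" and "x \<noteq> y"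
  obtains m where "m > 0"
    "corresponding_vertex P Q y - corresponding_vertex P Q x = m *\<^sub>R (y - x)"
proof -
  obtain m where m: "corresponding_vertex P Q y - corresponding_vertex P Q x = m *\<^sub>R (y - x)"
    using corresponding_vertex_edge_parallel[OF P fan edge] by blast
  moreover have "x extreme_point_of P" "y extreme_point_of P"
    using extreme_point_of_simplex_face[OF edge affine_independent_2] by auto
  ultimately show thesis
    using corresponding_vertex_diff_pos[OF P fan _ _ \<open>x \<noteq> y\<close>] that by blast
qed

lemma affine_independent_scaleR_diff_eq:
  fixes C :: "'a::euclidean_space set"
  assumes C: "\<not> affine_dependent C" and in_C: "x \<in> C" "y \<in> C" "z \<in> C"
    and distinct: "x \<noteq> y" "y \<noteq> z"
    and eq: "\<alpha> *\<^sub>R (y - x) = \<beta> *\<^sub>R (z - x)"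
  shows "\<alpha> = 0"
proof (rule ccontr)
  assume "\<alpha> \<noteq> 0"
  then have "y = (1 - \<beta> / \<alpha>) *\<^sub>R x + (\<beta> / \<alpha>) *\<^sub>R z"
    using arg_cong[OF eq, of "scaleR (1 / \<alpha>)"] by (simp add: algebra_simps)
  then have "y \<in> affine hull {x, z}"
    unfolding affine_hull_2 by (intro CollectI exI[of _ "1 - \<beta> / \<alpha>"] exI[of _ "\<beta> / \<alpha>"]) simp
  also have "affine hull {x, z} \<subseteq> affine hull (C - {y})"
    by (rule hull_mono) (use in_C distinct in auto)
  finally show False using C in_C unfolding affine_dependent_def by blast
qed

lemma corresponding_vertex_simplex_face:
  fixes P Q :: "'a::euclidean_space set"
  assumes P: "polytope P" and fan: "normal_fan Q = normal_fan P"
    and face: "convex hull C face_of P" and C: "\<not> affine_dependent C" and "x \<in> C"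
  obtains l where "l > 0"
    "\<And>y. y \<in> C \<Longrightarrow> corresponding_vertex P Q y = corresponding_vertex P Q x + l *\<^sub>R (y - x)"
proof (cases "C \<subseteq> {x}")
  case True
  then show thesis by (intro that[of 1]) auto
next
  case False
  let ?\<sigma> = "corresponding_vertex P Q"
  have edge: "\<exists>m>0. ?\<sigma> b - ?\<sigma> a = m *\<^sub>R (b - a)"
    if "a \<in> C" "b \<in> C" "a \<noteq> b" for a b
    using corresponding_vertex_edge[OF P fan face_of_convex_hull_subset[OF face C]] that by blast
  obtain y1 where "y1 \<in> C" "y1 \<noteq> x" using False by blast
  then obtain l where "l > 0" and l: "?\<sigma> y1 - ?\<sigma> x = l *\<^sub>R (y1 - x)"
    using edge \<open>x \<in> C\<close> by blast
  have "?\<sigma> y = ?\<sigma> x + l *\<^sub>R (y - x)" if "y \<in> C" for y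
  proof (cases "y = x \<or> y = y1")
    case True
    then show ?thesis using l by (auto simp: algebra_simps)
  next
    case False
    then have "x \<noteq> y" "y1 \<noteq> y" by auto
    obtain m where m: "?\<sigma> y - ?\<sigma> x = m *\<^sub>R (y - x)"
      using edge[of x y] \<open>x \<in> C\<close> \<open>y \<in> C\<close> \<open>x \<noteq> y\<close> by blast
    obtain n where n: "?\<sigma> y - ?\<sigma> y1 = n *\<^sub>R (y - y1)"
      using edge[of y1 y] \<open>y1 \<in> C\<close> \<open>y \<in> C\<close> \<open>y1 \<noteq> y\<close> by blast
    have "?\<sigma> y - ?\<sigma> x = (?\<sigma> y - ?\<sigma> y1) + (?\<sigma> y1 - ?\<sigma> x)" by simp
    then have "m *\<^sub>R (y - x) = n *\<^sub>R (y - y1) + l *\<^sub>R (y1 - x)"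
      by (simp only: m n l)
    then have eq: "(m - n) *\<^sub>R (y - x) = (l - n) *\<^sub>R (y1 - x)"
      by (simp add: algebra_simps)
    have "m - n = 0"
      using affine_independent_scaleR_diff_eq[OF C \<open>x \<in> C\<close> \<open>y \<in> C\<close> \<open>y1 \<in> C\<close>
          \<open>x \<noteq> y\<close> \<open>y1 \<noteq> y\<close>[symmetric] eq] .
    moreover have "l - n = 0"
      using affine_independent_scaleR_diff_eq[OF C \<open>x \<in> C\<close> \<open>y1 \<in> C\<close> \<open>y \<in> C\<close>
          \<open>y1 \<noteq> x\<close>[symmetric] \<open>y1 \<noteq> y\<close> eq[symmetric]] .
    ultimately show ?thesis using m by (simp add: algebra_simps)
  qed
  then show thesis using that \<open>l > 0\<close> by blast
qed

lemma corresponding_vertex_two_simplex_faces: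
  fixes P Q :: "'a::euclidean_space set"
  assumes P: "polytope P" and fan: "normal_fan Q = normal_fan P"
    and face: "convex hull C face_of P" "convex hull C' face_of P"
    and indep: "\<not> affine_dependent C" "\<not> affine_dependent C'"
    and p: "p \<in> C" "p \<in> C'" and q: "q \<in> C" "q \<in> C'" "q \<noteq> p"
  obtains l where "l > 0"
    "\<And>y. y \<in> C \<union> C' \<Longrightarrow> corresponding_vertex P Q y = corresponding_vertex P Q p + l *\<^sub>R (y - p)"
proof -
  obtain l where "l > 0" and l: "\<And>y. y \<in> C \<Longrightarrow>
      corresponding_vertex P Q y = corresponding_vertex P Q p + l *\<^sub>R (y - p)"
    using corresponding_vertex_simplex_face[OF P fan face(1) indep(1) p(1)] by blast
  obtain l' where l': "\<And>y. y \<in> C' \<Longrightarrow>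
      corresponding_vertex P Q y = corresponding_vertex P Q p + l' *\<^sub>R (y - p)"
    using corresponding_vertex_simplex_face[OF P fan face(2) indep(2) p(2)] by blast
  have "l' = l" using l[OF q(1)] l'[OF q(2)] q(3) by auto
  then show thesis using that \<open>l > 0\<close> l l' by blast
qed

section \<open>Facets of simplicial polytopes\<close>

lemma simplicial_polytope_facet_simplex:
  fixes P :: "'a::euclidean_space set"
  assumes "simplicial_polytope P" and "F facet_of P"
  obtains C where "\<not> affine_dependent C" "F = convex hull C"
  using assms unfolding simplicial_polytope_def simplex by blast

lemma extreme_point_mem_simplex_face:
  fixes P :: "'a::euclidean_space set"
  assumes "convex hull C face_of P" and "\<not> affine_dependent C"
    and "x extreme_point_of P" and "x \<in> convex hull C"
  shows "x \<in> C"
  using assms extreme_point_of_face extreme_point_of_convex_hull_affine_independent by blast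

lemma face_subset_two_facets:
  fixes P :: "'a::euclidean_space set"
  assumes P: "polyhedron P" and E: "E face_of P" "E \<noteq> {}"
    and dim: "aff_dim E < aff_dim P - 1"
  obtains F G where "F facet_of P" "G facet_of P" "E \<subseteq> F" "E \<subseteq> G" "F \<noteq> G"
proof -
  have "E \<noteq> P" using dim by auto
  then obtain F where F: "F facet_of P" "E \<subseteq> F"
    using face_of_polyhedron_subset_facet[OF P E] by blast
  have "E \<noteq> F" using F(1) dim by (auto simp: facet_of_def)
  then have "{G. G facet_of P \<and> E \<subseteq> G} \<noteq> {F}"
    using face_of_polyhedron[OF P E \<open>E \<noteq> P\<close>] by force
  then obtain G where "G facet_of P" "E \<subseteq> G" "G \<noteq> F" using F by blast
  then show thesis using that F by blast
qed

lemma aff_dim_Un_facets: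
  fixes P :: "'a::euclidean_space set"
  assumes P: "polyhedron P" and F: "F facet_of P" and G: "G facet_of P" and "F \<noteq> G"
  shows "aff_dim (F \<union> G) = aff_dim P"
proof -
  have "\<not> G \<subseteq> affine hull F"
  proof
    assume "G \<subseteq> affine hull F"
    then have "G \<subseteq> F"
      using face_of_imp_eq_affine_Int[OF polyhedron_imp_convex[OF P] facet_of_imp_face_of[OF F]]
        facet_of_imp_subset[OF G] by blast
    then have "G face_of F"
      using face_of_subset facet_of_imp_face_of[OF G] facet_of_imp_subset[OF F] by blast
    then have "aff_dim G < aff_dim F"
      using face_of_aff_dim_lt[OF face_of_imp_convex[OF facet_of_imp_face_of[OF F]]] \<open>F \<noteq> G\<close>
      by blast
    then show False using F G by (simp add: facet_of_def)
  qed
  then obtain z where "z \<in> G" "z \<notin> affine hull F" by blast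
  then have "aff_dim (insert z F) = aff_dim P" using F by (simp add: aff_dim_insert facet_of_def)
  moreover have "aff_dim (insert z F) \<le> aff_dim (F \<union> G)"
    by (rule aff_dim_subset) (use \<open>z \<in> G\<close> in auto)
  moreover have "aff_dim (F \<union> G) \<le> aff_dim P"
    using facet_of_imp_subset F G by (intro aff_dim_subset) auto
  ultimately show ?thesis by linarith
qed

lemma simplicial_polytope_edge_at_vertex:
  fixes P :: "'a::euclidean_space set"
  assumes S: "simplicial_polytope P" and dim: "aff_dim P \<ge> 2" and p: "p extreme_point_of P"
  obtains q where "q \<noteq> p" "convex hull {p, q} face_of P"
proof -
  have P: "polyhedron P" using S polytope_imp_polyhedron by (auto simp: simplicial_polytope_def)
  have "{p} face_of P" using p face_of_singleton by blast
  moreover have "{p} \<noteq> P" using dim by auto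
  ultimately obtain F where F: "F facet_of P" "p \<in> F"
    using face_of_polyhedron_subset_facet[OF P] by blast
  then obtain C where C: "\<not> affine_dependent C" "F = convex hull C"
    using simplicial_polytope_facet_simplex[OF S] by blast
  have CF: "convex hull C face_of P" using F(1) C(2) facet_of_imp_face_of by blast
  have "p \<in> C" using extreme_point_mem_simplex_face[OF CF C(1) p] F(2) C(2) by blast
  have "aff_dim C = aff_dim P - 1" using F(1) C(2) by (simp add: facet_of_def aff_dim_convex_hull)
  then have "\<not> C \<subseteq> {p}" using dim aff_dim_subset[of C "{p}"] by auto
  then obtain q where "q \<in> C" "q \<noteq> p" by blast
  then show thesis
    using that face_of_convex_hull_subset[OF CF C(1), of "{p, q}"] \<open>p \<in> C\<close> by blast
qed

text \<open>This is where \<open>aff_dim P \<ge> 3\<close> is needed: only then is an edge not a facet, so that it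
  lies in two distinct facets.\<close>
lemma simplicial_polytope_two_simplex_faces:
  fixes P :: "'a::euclidean_space set"
  assumes S: "simplicial_polytope P" and dim: "aff_dim P \<ge> 3" and p: "p extreme_point_of P"
  obtains C C' q where "convex hull C face_of P" "convex hull C' face_of P"
    "\<not> affine_dependent C" "\<not> affine_dependent C'"
    "p \<in> C" "p \<in> C'" "q \<in> C" "q \<in> C'" "q \<noteq> p"
    "affine hull (C \<union> C') = affine hull P"
proof -
  have P: "polyhedron P" using S polytope_imp_polyhedron by (auto simp: simplicial_polytope_def)
  obtain q where "q \<noteq> p" and edge: "convex hull {p, q} face_of P"
    using simplicial_polytope_edge_at_vertex[OF S _ p] dim by auto
  have q: "q extreme_point_of P"
    using extreme_point_of_simplex_face[OF edge affine_independent_2] by simp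
  have "aff_dim (convex hull {p, q}) < aff_dim P - 1"
    using dim by (simp add: aff_dim_convex_hull)
  then obtain G G' where G: "G facet_of P" "G' facet_of P" "convex hull {p, q} \<subseteq> G"
      "convex hull {p, q} \<subseteq> G'" "G \<noteq> G'"
    using face_subset_two_facets[OF P edge] by (metis convex_hull_eq_empty insert_not_empty)
  obtain C where C: "\<not> affine_dependent C" "G = convex hull C"
    using simplicial_polytope_facet_simplex[OF S G(1)] by blast
  obtain C' where C': "\<not> affine_dependent C'" "G' = convex hull C'"
    using simplicial_polytope_facet_simplex[OF S G(2)] by blast
  have faces: "convex hull C face_of P" "convex hull C' face_of P"
    using G(1,2) C(2) C'(2) facet_of_imp_face_of by blast+
  have pq: "{p, q} \<subseteq> C" "{p, q} \<subseteq> C'"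
    using extreme_point_mem_simplex_face[OF faces(1) C(1)] extreme_point_mem_simplex_face[OF faces(2) C'(1)]
      p q G(3,4) C(2) C'(2) hull_inc[of _ "{p, q}"] by blast+
  have CP: "C \<union> C' \<subseteq> P"
    using faces C(1) C'(1) extreme_point_of_simplex_face extreme_point_of_imp_mem by blast
  have "aff_dim P = aff_dim (G \<union> G')" using aff_dim_Un_facets[OF P G(1,2,5)] by simp
  also have "\<dots> \<le> aff_dim (C \<union> C')"
  proof -
    have "G \<union> G' \<subseteq> convex hull (C \<union> C')" using C(2) C'(2) by (auto intro: hull_mono[THEN subsetD])
    then show ?thesis by (metis aff_dim_subset aff_dim_convex_hull)
  qed
  finally have "aff_dim (C \<union> C') = aff_dim P"
    using aff_dim_subset[OF CP] by simp
  then have "affine hull (C \<union> C') = affine hull P"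
    using aff_dim_eq_full_gen[OF CP] by blast
  then show thesis using that faces C(1) C'(1) pq \<open>q \<noteq> p\<close> by blast
qed

section \<open>Inscribed polytopes\<close>

lemma equidistant_point_unique:
  fixes c c' :: "'a::euclidean_space"
  assumes D: "affine hull D = UNIV"
    and c: "\<And>y. y \<in> D \<Longrightarrow> dist c y = \<rho>" and c': "\<And>y. y \<in> D \<Longrightarrow> dist c' y = \<rho>'"
  shows "c = c'"
proof -
  obtain p where "p \<in> D" using D by fastforce
  have "(c - c') \<bullet> (y - p) = 0" if "y \<in> D" for y
  proof -
    have sq: "(x - y) \<bullet> (x - y) - (x - p) \<bullet> (x - p) = y \<bullet> y - p \<bullet> p - 2 * (x \<bullet> (y - p))" for x
      by (simp add: inner_diff_left inner_diff_right inner_commute algebra_simps)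
    have "dist c y = dist c p" "dist c' y = dist c' p" using c c' that \<open>p \<in> D\<close> by simp_all
    then have "(c - y) \<bullet> (c - y) = (c - p) \<bullet> (c - p)" "(c' - y) \<bullet> (c' - y) = (c' - p) \<bullet> (c' - p)"
      by (simp_all add: dist_norm norm_eq_sqrt_inner)
    then have "c \<bullet> (y - p) = c' \<bullet> (y - p)" using sq[of c] sq[of c'] by simp
    then show ?thesis by (simp add: inner_diff_left)
  qed
  then have "D \<subseteq> {x. (c - c') \<bullet> x = (c - c') \<bullet> p}" by (auto simp: inner_diff_right)
  then have "affine hull D \<subseteq> {x. (c - c') \<bullet> x = (c - c') \<bullet> p}"
    by (intro hull_minimal) (auto simp: affine_hyperplane)
  then have "(c - c') \<bullet> (p + (c - c')) = (c - c') \<bullet> p" using D by auto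
  then show ?thesis by (simp add: inner_add_right)
qed

lemma dist_homothety_centre:
  fixes a p y :: "'a::real_normed_vector"
  assumes "l > 0"
  shows "dist (p - (1 / l) *\<^sub>R a) y = norm (a + l *\<^sub>R (y - p)) / l"
proof -
  have "a + l *\<^sub>R (y - p) = l *\<^sub>R (y - (p - (1 / l) *\<^sub>R a))"
    using assms by (simp add: algebra_simps)
  then show ?thesis using assms by (simp add: dist_norm norm_minus_commute)
qed

text \<open>Both \<open>p - a / l\<close> and \<open>p - a' / l'\<close> are the circumcentre of D: the homotheties
  \<open>y \<mapsto> a + l (y - p)\<close> and \<open>y \<mapsto> a' + l' (y - p)\<close> map it to the origin.\<close>
lemma homothetic_copies_on_centred_spheres:
  fixes a a' p :: "'a::euclidean_space"
  assumes D: "affine hull D = UNIV" and "l > 0" "l' > 0"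
    and r: "\<And>y. y \<in> D \<Longrightarrow> norm (a + l *\<^sub>R (y - p)) = r"
    and r': "\<And>y. y \<in> D \<Longrightarrow> norm (a' + l' *\<^sub>R (y - p)) = r'"
  shows "l' *\<^sub>R a = l *\<^sub>R a'"
proof -
  have "p - (1 / l) *\<^sub>R a = p - (1 / l') *\<^sub>R a'"
    by (rule equidistant_point_unique[OF D])
      (simp_all add: dist_homothety_centre \<open>l > 0\<close> \<open>l' > 0\<close> r r')
  then have "(l * l') *\<^sub>R ((1 / l) *\<^sub>R a) = (l * l') *\<^sub>R ((1 / l') *\<^sub>R a')" by simp
  then show ?thesis using \<open>l > 0\<close> \<open>l' > 0\<close> by simp
qed

lemma inscribed_corresponding_vertex_ratio:
  fixes P Q Q' :: "'a::euclidean_space set"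
  assumes S: "simplicial_polytope P" and dim: "aff_dim P = int DIM('a)" "DIM('a) \<ge> 3"
    and fan: "normal_fan Q = normal_fan P" and norm_r: "\<forall>v. v extreme_point_of Q \<longrightarrow> norm v = r"
    and fan': "normal_fan Q' = normal_fan P" and norm_r': "\<forall>v. v extreme_point_of Q' \<longrightarrow> norm v = r'"
    and p: "p extreme_point_of P"
  shows "r / r' > 0"
    "corresponding_vertex P Q p = (r / r') *\<^sub>R corresponding_vertex P Q' p"
proof -
  have P: "polytope P" using S by (simp add: simplicial_polytope_def)
  let ?\<sigma> = "corresponding_vertex P Q" and ?\<sigma>' = "corresponding_vertex P Q'"
  obtain C C' q where faces: "convex hull C face_of P" "convex hull C' face_of P"
    and indep: "\<not> affine_dependent C" "\<not> affine_dependent C'"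
    and p_in: "p \<in> C" "p \<in> C'" and q_in: "q \<in> C" "q \<in> C'" and "q \<noteq> p"
    and span: "affine hull (C \<union> C') = affine hull P"
    using simplicial_polytope_two_simplex_faces[OF S _ p] dim by auto
  have span: "affine hull (C \<union> C') = UNIV" using span dim aff_dim_eq_full by metis
  have vertices: "y extreme_point_of P" if "y \<in> C \<union> C'" for y
    using that faces indep extreme_point_of_simplex_face by blast
  obtain l where "l > 0"
    and l: "\<And>y. y \<in> C \<union> C' \<Longrightarrow> ?\<sigma> y = ?\<sigma> p + l *\<^sub>R (y - p)"
    using corresponding_vertex_two_simplex_faces[OF P fan faces indep p_in q_in \<open>q \<noteq> p\<close>] by blast
  obtain l' where "l' > 0"
    and l': "\<And>y. y \<in> C \<union> C' \<Longrightarrow> ?\<sigma>' y = ?\<sigma>' p + l' *\<^sub>R (y - p)"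
    using corresponding_vertex_two_simplex_faces[OF P fan' faces indep p_in q_in \<open>q \<noteq> p\<close>] by blast
  have "l' *\<^sub>R ?\<sigma> p = l *\<^sub>R ?\<sigma>' p"
  proof (rule homothetic_copies_on_centred_spheres[OF span \<open>l > 0\<close> \<open>l' > 0\<close>])
    show "norm (?\<sigma> p + l *\<^sub>R (y - p)) = r" if "y \<in> C \<union> C'" for y
      using l[OF that] norm_r corresponding_vertex(1)[OF P fan vertices[OF that]] by simp
    show "norm (?\<sigma>' p + l' *\<^sub>R (y - p)) = r'" if "y \<in> C \<union> C'" for y
      using l'[OF that] norm_r' corresponding_vertex(1)[OF P fan' vertices[OF that]] by simp
  qed
  then have "(1 / l') *\<^sub>R (l' *\<^sub>R ?\<sigma> p) = (l / l') *\<^sub>R ?\<sigma>' p" by simp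
  then have ratio: "?\<sigma> p = (l / l') *\<^sub>R ?\<sigma>' p" using \<open>l' > 0\<close> by simp
  have norm_p: "norm (?\<sigma>' p) = r'" and "norm (?\<sigma>' q) = r'"
    using norm_r' corresponding_vertex(1)[OF P fan' vertices] p_in q_in by blast+
  moreover have "?\<sigma>' q \<noteq> ?\<sigma>' p"
    using corresponding_vertex_inj[OF P fan'] vertices p_in q_in \<open>q \<noteq> p\<close> by blast
  ultimately have "r' \<noteq> 0" by auto
  have "r = norm (?\<sigma> p)" using norm_r corresponding_vertex(1)[OF P fan p] by simp
  also have "\<dots> = (l / l') * r'" using ratio norm_p \<open>l > 0\<close> \<open>l' > 0\<close> by simp
  finally have "r / r' = l / l'" using \<open>r' \<noteq> 0\<close> by simp
  then show "r / r' > 0" "?\<sigma> p = (r / r') *\<^sub>R ?\<sigma>' p"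
    using ratio \<open>l > 0\<close> \<open>l' > 0\<close> by simp_all
qed

lemma InCone_homothetic:
  fixes P Q Q' :: "'a::euclidean_space set"
  assumes S: "simplicial_polytope P" and dim: "aff_dim P = int DIM('a)" "DIM('a) \<ge> 3"
    and Q: "Q \<in> InCone P" and Q': "Q' \<in> InCone P"
  obtains k where "k > 0" "Q = (\<lambda>x. k *\<^sub>R x) ` Q'"
proof -
  have P: "polytope P" using S by (simp add: simplicial_polytope_def)
  obtain r where fan: "normal_fan Q = normal_fan P" and "polytope Q"
    and norm_r: "\<forall>v. v extreme_point_of Q \<longrightarrow> norm v = r"
    using Q by (auto simp: InCone_def inscribed_origin_def)
  obtain r' where fan': "normal_fan Q' = normal_fan P" and "polytope Q'"
    and norm_r': "\<forall>v. v extreme_point_of Q' \<longrightarrow> norm v = r'"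
    using Q' by (auto simp: InCone_def inscribed_origin_def)
  note ratio = inscribed_corresponding_vertex_ratio[OF S dim fan norm_r fan' norm_r']
  have "P \<noteq> {}" using dim aff_dim_empty[of P] by auto
  then obtain p where "p extreme_point_of P"
    using extreme_point_exists_convex polytope_imp_compact polytope_imp_convex P by blast
  have "{v. v extreme_point_of Q} = (\<lambda>x. (r / r') *\<^sub>R x) ` {v. v extreme_point_of Q'}"
    unfolding extreme_points_eq_image_corresponding_vertex[OF P \<open>polytope Q\<close> fan]
      extreme_points_eq_image_corresponding_vertex[OF P \<open>polytope Q'\<close> fan'] image_image
    using ratio(2) by (auto simp: image_iff)
  then have "Q = (\<lambda>x. (r / r') *\<^sub>R x) ` Q'"
    using polytope_eq_convex_hull_extreme_points \<open>polytope Q\<close> \<open>polytope Q'\<close>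
    by (metis convex_hull_scaling)
  then show thesis using that ratio(1)[OF \<open>p extreme_point_of P\<close>] by blast
qed

lemma support_fun_scaleR:
  fixes S :: "'a::euclidean_space set"
  assumes "k \<ge> 0" and "bounded S" and "S \<noteq> {}"
  shows "support_fun ((\<lambda>x. k *\<^sub>R x) ` S) u = k * support_fun S u"
proof -
  have "bounded ((\<lambda>x. u \<bullet> x) ` S)"
    using assms(2) bounded_linear_image bounded_linear_inner_right by blast
  then have "k * Sup ((\<lambda>x. u \<bullet> x) ` S) = (SUP x\<in>S. k * (u \<bullet> x))"
    using continuous_at_Sup_mono[of "\<lambda>t. k * t" "(\<lambda>x. u \<bullet> x) ` S"] assms(1,3)
    by (simp add: image_image bounded_imp_bdd_above mono_def mult_left_mono continuous_mult)
  then show ?thesis by (simp add: support_fun_def image_image)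
qed

lemma same_normal_fan_nonempty:
  fixes P Q :: "'a::euclidean_space set"
  assumes "normal_fan Q = normal_fan P" and "convex P" and "P \<noteq> {}"
  shows "Q \<noteq> {}"
proof -
  have "normal_cone P P \<in> normal_fan Q"
    using assms face_of_refl unfolding normal_fan_def by blast
  then obtain E where "E face_of Q" "E \<noteq> {}" unfolding normal_fan_def by blast
  then show ?thesis using face_of_imp_subset by blast
qed

lemma InCone_support_fun_proportional:
  fixes P Q Q' :: "'a::euclidean_space set"
  assumes S: "simplicial_polytope P" and dim: "aff_dim P = int DIM('a)" "DIM('a) \<ge> 3"
    and Q: "Q \<in> InCone P" and Q': "Q' \<in> InCone P"
  shows "\<exists>t. support_fun Q = (\<lambda>u. t * support_fun Q' u)"
proof -
  obtain k where "k > 0" and homothety: "Q = (\<lambda>x. k *\<^sub>R x) ` Q'"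
    using InCone_homothetic[OF S dim Q Q'] by blast
  have "bounded Q'" using Q' polytope_imp_bounded by (auto simp: InCone_def)
  moreover have "Q' \<noteq> {}"
    using same_normal_fan_nonempty Q' S dim polytope_imp_convex aff_dim_empty[of P]
    by (auto simp: InCone_def simplicial_polytope_def)
  ultimately show ?thesis
    using support_fun_scaleR[of k Q'] \<open>k > 0\<close> homothety by auto
qed

theorem corollary4p9:
  fixes P :: "'a::euclidean_space set"
  assumes "simplicial_polytope P"
    and "aff_dim P = int DIM('a)"
    and "DIM('a) \<ge> 3"
  shows "span_dim_le_one (support_fun ` InCone P)"
proof (cases "InCone P = {}")
  case True
  then show ?thesis by (simp add: span_dim_le_one_def)
next
  case False
  then obtain Q' where "Q' \<in> InCone P" by blast
  then show ?thesis
    using InCone_support_fun_proportional[OF assms] unfolding span_dim_le_one_def by blast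
qed

end
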